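(* Let $\theta$ be a discrete valuation on Johnstone's dcpo $\mathcal J$ (with the Scott topology) with total mass $\theta(\mathcal J)=1-r$, where $r>0$. Then $\theta+r\mu$ is not a minimal valuation, where $\mu(U)=1$ for non-empty Scott-open $U$ and $\mu(\emptyset)=0$.
   Context: Johnstone's dcpo: $\mathcal J=\mathbb N\times(\mathbb N\cup\{\infty\})$ ordered by $(a,b)\le(c,d)$ iff either ($a=c$ and $b\le d$) or ($d=\infty$ and $b\le c$). A valuation on a space $X$ is a strict, monotone, modular map $\mathcal OX\to[0,\infty]$; it is continuous if it preserves directed suprema of opens. Continuous valuations are ordered pointwise, forming a dcpo $\mathcal VX$ with pointwise directed suprema. A simple valuation is a finite sum $\sum_{i=1}^n r_i\delta_{x_i}$ ($r_i\in[0,\infty)$, $\delta_x$ the Dirac valuation); a discrete valuation is a countable sum $\sum_{i=1}^\infty r_i\delta_{x_i}$ (supremum of its partial sums). The minimal valuations are the elements of the smallest subset of $\mathcal VX$ containing the simple valuations and closed under directed suprema. *)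

theory Defs
  imports "HOL-Library.Extended_Nat" "HOL-Library.Extended_Nonnegative_Real"
begin

type_synonym jpt = "nat \<times> enat"

definition jle :: "jpt \<Rightarrow> jpt \<Rightarrow> bool" where
  "jle p q \<longleftrightarrow> (fst p = fst q \<and> snd p \<le> snd q) \<or> (snd q = \<infinity> \<and> snd p \<le> enat (fst q))"

definition j_directed :: "jpt set \<Rightarrow> bool" where
  "j_directed D \<longleftrightarrow> D \<noteq> {} \<and> (\<forall>x\<in>D. \<forall>y\<in>D. \<exists>z\<in>D. jle x z \<and> jle y z)"

definition j_is_lub :: "jpt set \<Rightarrow> jpt \<Rightarrow> bool" where
  "j_is_lub D s \<longleftrightarrow> (\<forall>x\<in>D. jle x s) \<and> (\<forall>u. (\<forall>x\<in>D. jle x u) \<longrightarrow> jle s u)"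

definition scott_open :: "jpt set \<Rightarrow> bool" where
  "scott_open U \<longleftrightarrow> (\<forall>x y. x \<in> U \<longrightarrow> jle x y \<longrightarrow> y \<in> U) \<and>
     (\<forall>D s. j_directed D \<longrightarrow> j_is_lub D s \<longrightarrow> s \<in> U \<longrightarrow> D \<inter> U \<noteq> {})"

text \<open>Valuations are represented as functions on all subsets; only their values on
  Scott-open sets are meaningful.\<close>
definition dirac :: "jpt \<Rightarrow> jpt set \<Rightarrow> ennreal" where
  "dirac x U = (if x \<in> U then 1 else 0)"

definition simple_valuation :: "(jpt set \<Rightarrow> ennreal) \<Rightarrow> bool" where
  "simple_valuation \<nu> \<longleftrightarrow> (\<exists>(n::nat) (x::nat \<Rightarrow> jpt) (r::nat \<Rightarrow> real). (\<forall>i. r i \<ge> 0) \<and>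
     (\<forall>U. scott_open U \<longrightarrow> \<nu> U = (\<Sum>i<n. ennreal (r i) * dirac (x i) U)))"

definition discrete_valuation :: "(jpt set \<Rightarrow> ennreal) \<Rightarrow> bool" where
  "discrete_valuation \<nu> \<longleftrightarrow> (\<exists>(x::nat \<Rightarrow> jpt) (r::nat \<Rightarrow> real). (\<forall>i. r i \<ge> 0) \<and>
     (\<forall>U. scott_open U \<longrightarrow> \<nu> U = (\<Sum>i. ennreal (r i) * dirac (x i) U)))"

definition val_le :: "(jpt set \<Rightarrow> ennreal) \<Rightarrow> (jpt set \<Rightarrow> ennreal) \<Rightarrow> bool" where
  "val_le \<nu> \<nu>' \<longleftrightarrow> (\<forall>U. scott_open U \<longrightarrow> \<nu> U \<le> \<nu>' U)"

definition val_directed :: "(jpt set \<Rightarrow> ennreal) set \<Rightarrow> bool" where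
  "val_directed F \<longleftrightarrow> F \<noteq> {} \<and> (\<forall>a\<in>F. \<forall>b\<in>F. \<exists>c\<in>F. val_le a c \<and> val_le b c)"

inductive minimal_valuation :: "(jpt set \<Rightarrow> ennreal) \<Rightarrow> bool" where
  simple: "simple_valuation \<nu> \<Longrightarrow> minimal_valuation \<nu>"
| dsup: "val_directed F \<Longrightarrow> (\<forall>\<nu>'\<in>F. minimal_valuation \<nu>') \<Longrightarrow>
     (\<forall>U. scott_open U \<longrightarrow> \<nu> U = (SUP \<nu>'\<in>F. \<nu>' U)) \<Longrightarrow> minimal_valuation \<nu>"

definition mu :: "jpt set \<Rightarrow> ennreal" where
  "mu U = (if U = {} then 0 else 1)"

end

theory Submission
  imports Defs
begin

text \<open>Call a valuation tame if it is monotone and modular on Scott-open sets and, when its mass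
  is finite, (i) up to any \<open>e > 0\<close> its mass sits in finitely many columns together with
  arbitrarily high points, and (ii) the quadrants \<open>[K,\<infinity>) \<times> [K,\<infinity>]\<close> have mass tending
  to 0. Simple valuations are tame, and tameness survives directed suprema: (i) passes to the
  supremum by approximating its mass from below, and for (ii) modularity against the sets of (i)
  bounds the quadrant mass of each approximant by the mass it puts on the tops \<open>(c, \<infinity>)\<close> of
  the columns \<open>c \<ge> K\<close>, and these masses are summable uniformly along the directed family.
  So every minimal valuation is tame; but \<open>\<mu>\<close> gives mass 1 to every quadrant.\<close>

lemma j_directedE:
  assumes "j_directed D" "x \<in> D" "y \<in> D"
  obtains z where "z \<in> D" "jle x z" "jle y z"
  using assms unfolding j_directed_def by blast

lemma j_lub_finite_mem:
  assumes dir: "j_directed D" and lub: "j_is_lub D (c, enat m)"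
  shows "(c, enat m) \<in> D"
proof (rule ccontr)
  assume notin: "(c, enat m) \<notin> D"
  have below: "fst x = c \<and> snd x < enat m" if "x \<in> D" for x
  proof -
    have "jle x (c, enat m)" using lub that unfolding j_is_lub_def by blast
    then have "x = (c, snd x)" "snd x \<le> enat m" unfolding jle_def by (auto simp: prod_eq_iff)
    with notin that show ?thesis by (metis fst_conv order_less_le)
  qed
  obtain x0 where "x0 \<in> D" using dir unfolding j_directed_def by blast
  then have "m \<ge> 1" using below[of x0] by (cases m) (auto simp: enat_0)
  have "jle x (c, enat (m - 1))" if "x \<in> D" for x
    using below[OF that] by (cases "snd x") (auto simp: jle_def)
  then have "jle (c, enat m) (c, enat (m - 1))" using lub unfolding j_is_lub_def by blast
  then show False using \<open>m \<ge> 1\<close> by (simp add: jle_def)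
qed

lemma j_lub_infinite_column:
  assumes dir: "j_directed D" and lub: "j_is_lub D (c, \<infinity>)"
  shows "\<exists>x\<in>D. fst x = c \<and> enat n \<le> snd x"
proof (rule ccontr)
  define h where "h = max n (Suc c)"
  assume none: "\<not> ?thesis"
  have low: "snd x < enat h" if "x \<in> D" for x
  proof -
    have "jle x (c, \<infinity>)" using lub that unfolding j_is_lub_def by blast
    then consider "fst x = c" | "snd x \<le> enat c" unfolding jle_def by auto
    then show ?thesis
    proof cases
      case 1
      then have "snd x < enat n" using none that by (auto simp: not_le)
      then show ?thesis by (rule less_le_trans) (simp add: h_def)
    next
      case 2
      then show ?thesis by (rule le_less_trans) (simp add: h_def)
    qed
  qed
  obtain x0 where x0: "x0 \<in> D" using dir unfolding j_directed_def by auto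
  have "fst x = fst x0" if x: "x \<in> D" for x
  proof -
    obtain z where "z \<in> D" "jle x z" "jle x0 z" using dir x x0 by (rule j_directedE)
    then show ?thesis using low[of z] unfolding jle_def by auto
  qed
  then have "jle x (fst x0, enat h)" if "x \<in> D" for x
    using low[OF that] that unfolding jle_def by auto
  then have "jle (c, \<infinity>) (fst x0, enat h)" using lub unfolding j_is_lub_def by blast
  then show False by (simp add: jle_def)
qed

text \<open>The only non-compact points of the dcpo are the tops \<open>(c, \<infinity>)\<close>, approached by their
  own column.\<close>

lemma scott_openI:
  assumes up: "\<And>x y. x \<in> U \<Longrightarrow> jle x y \<Longrightarrow> y \<in> U"
    and top: "\<And>c. (c, \<infinity>) \<in> U \<Longrightarrow> \<exists>n. (c, enat n) \<in> U"
  shows "scott_open U"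
  unfolding scott_open_def
proof (intro conjI allI impI)
  fix x y assume "x \<in> U" "jle x y"
  then show "y \<in> U" by (rule up)
next
  fix D s assume dir: "j_directed D" and lub: "j_is_lub D s" and "s \<in> U"
  obtain c e where s: "s = (c, e)" by fastforce
  show "D \<inter> U \<noteq> {}"
  proof (cases e)
    case (enat m)
    then show ?thesis using j_lub_finite_mem dir lub \<open>s \<in> U\<close> s by blast
  next
    case infinity
    obtain n where "(c, enat n) \<in> U" using top \<open>s \<in> U\<close> s infinity by blast
    moreover obtain x where "x \<in> D" "fst x = c" "enat n \<le> snd x"
      using j_lub_infinite_column dir lub s infinity by blast
    ultimately show ?thesis using up[of "(c, enat n)" x] by (auto simp: jle_def)
  qed
qed

lemma scott_open_UNIV: "scott_open UNIV"
  unfolding scott_open_def j_directed_def by auto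

lemma scott_open_Un: "scott_open U \<Longrightarrow> scott_open V \<Longrightarrow> scott_open (U \<union> V)"
  unfolding scott_open_def by blast

lemma scott_open_Int:
  assumes U: "scott_open U" and V: "scott_open V"
  shows "scott_open (U \<inter> V)"
  unfolding scott_open_def
proof (intro conjI allI impI)
  fix x y assume "x \<in> U \<inter> V" "jle x y"
  then show "y \<in> U \<inter> V" using U V unfolding scott_open_def by blast
next
  fix D s assume dir: "j_directed D" and "j_is_lub D s" "s \<in> U \<inter> V"
  then obtain x y where "x \<in> D" "x \<in> U" "y \<in> D" "y \<in> V" using U V unfolding scott_open_def by blast
  then obtain z where "z \<in> D" "jle x z" "jle y z" using dir by (blast elim: j_directedE)
  then have "z \<in> U \<inter> V" using \<open>x \<in> U\<close> \<open>y \<in> V\<close> U V unfolding scott_open_def by blast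
  then show "D \<inter> (U \<inter> V) \<noteq> {}" using \<open>z \<in> D\<close> by blast
qed

definition top_region :: "nat set \<Rightarrow> nat \<Rightarrow> jpt set" where
  "top_region F L = {p. (fst p \<in> F \<or> L \<le> fst p) \<and> enat L \<le> snd p}"

definition quadrant :: "nat \<Rightarrow> nat \<Rightarrow> jpt set" where
  "quadrant K L = {p. K \<le> fst p \<and> enat L \<le> snd p}"

definition left_or_high :: "nat \<Rightarrow> nat \<Rightarrow> jpt set" where
  "left_or_high N L = {p. fst p < N \<or> enat L \<le> snd p}"

lemma enat_le_trans: "enat a \<le> b \<Longrightarrow> b \<le> enat c \<Longrightarrow> a \<le> c"
  using order_trans by fastforce

lemma enat_le_lower: "a \<le> b \<Longrightarrow> enat b \<le> x \<Longrightarrow> enat a \<le> x"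
  by (metis enat_ord_simps(1) order_trans)

lemma top_region_empty [simp]: "top_region {} L = quadrant L L"
  unfolding top_region_def quadrant_def by simp

lemma scott_open_top_region: "scott_open (top_region F L)"
  by (rule scott_openI) (auto simp: top_region_def jle_def dest: enat_le_trans)

lemma scott_open_quadrant: "K \<le> L \<Longrightarrow> scott_open (quadrant K L)"
  by (rule scott_openI) (auto simp: quadrant_def jle_def dest: enat_le_trans)

lemma scott_open_left_or_high: "scott_open (left_or_high N L)"
  by (rule scott_openI) (auto simp: left_or_high_def jle_def)

lemma top_region_antimono: "L \<le> L' \<Longrightarrow> top_region F L' \<subseteq> top_region F L"
  unfolding top_region_def by (auto intro: enat_le_lower)

lemma quadrant_antimono: "K \<le> K' \<Longrightarrow> L \<le> L' \<Longrightarrow> quadrant K' L' \<subseteq> quadrant K L"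
  unfolding quadrant_def by (auto intro: enat_le_lower)

lemma top_region_Un: "top_region {c} L \<union> top_region F L = top_region (insert c F) L"
  unfolding top_region_def by auto

lemma top_region_Int: "c \<notin> F \<Longrightarrow> top_region {c} L \<inter> top_region F L = quadrant L L"
  unfolding top_region_def quadrant_def by auto

lemma quadrant_Int_left_or_high:
  "N \<le> K \<Longrightarrow> K \<le> L \<Longrightarrow> quadrant K K \<inter> left_or_high N L = quadrant K L"
  unfolding quadrant_def left_or_high_def by (auto intro: enat_le_lower)

lemma quadrant_subset_top_region:
  "K' \<le> L \<Longrightarrow> quadrant K L \<subseteq> top_region {K..<K'} L \<union> quadrant K' K'"
  unfolding top_region_def quadrant_def by (auto intro: enat_le_lower)

definition open_monotone :: "(jpt set \<Rightarrow> ennreal) \<Rightarrow> bool" where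
  "open_monotone \<nu> \<longleftrightarrow> (\<forall>U V. scott_open U \<longrightarrow> scott_open V \<longrightarrow> U \<subseteq> V \<longrightarrow> \<nu> U \<le> \<nu> V)"

definition open_modular :: "(jpt set \<Rightarrow> ennreal) \<Rightarrow> bool" where
  "open_modular \<nu> \<longleftrightarrow>
     (\<forall>U V. scott_open U \<longrightarrow> scott_open V \<longrightarrow> \<nu> U + \<nu> V = \<nu> (U \<union> V) + \<nu> (U \<inter> V))"

definition tight_columns :: "(jpt set \<Rightarrow> ennreal) \<Rightarrow> bool" where
  "tight_columns \<nu> \<longleftrightarrow> (\<forall>e>0. \<exists>N. \<forall>L. \<nu> UNIV \<le> \<nu> (left_or_high N L) + ennreal e)"

definition vanishing_at_top :: "(jpt set \<Rightarrow> ennreal) \<Rightarrow> bool" where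
  "vanishing_at_top \<nu> \<longleftrightarrow> (\<forall>e>0. \<exists>K. \<nu> (quadrant K K) \<le> ennreal e)"

definition tame_valuation :: "(jpt set \<Rightarrow> ennreal) \<Rightarrow> bool" where
  "tame_valuation \<nu> \<longleftrightarrow> open_monotone \<nu> \<and> open_modular \<nu> \<and>
     (\<nu> UNIV < \<infinity> \<longrightarrow> tight_columns \<nu> \<and> vanishing_at_top \<nu>)"

text \<open>The mass at the top point \<open>(c, \<infinity>)\<close>: the regions \<open>top_region {c} L\<close> shrink to it
  apart from their quadrant part, which carries no mass in the limit for tame valuations.\<close>

definition column_top_mass :: "(jpt set \<Rightarrow> ennreal) \<Rightarrow> nat \<Rightarrow> ennreal" where
  "column_top_mass \<nu> c = (INF L. \<nu> (top_region {c} L))"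

lemma simple_valuation_tame:
  assumes "simple_valuation \<sigma>"
  shows "tame_valuation \<sigma>"
proof -
  obtain n :: nat and x r where
    \<sigma>: "\<And>U. scott_open U \<Longrightarrow> \<sigma> U = (\<Sum>i<n. ennreal (r i) * dirac (x i) U)"
    using assms unfolding simple_valuation_def by blast
  define N where "N = Suc (\<Sum>i<n. fst (x i))"
  have x_left: "fst (x i) < N" if "i < n" for i
    using member_le_sum[of i "{..<n}" "\<lambda>i. fst (x i)"] that by (simp add: N_def)
  have "open_monotone \<sigma>"
    unfolding open_monotone_def
  proof (intro allI impI)
    fix U V assume "scott_open U" "scott_open V" "U \<subseteq> V"
    then show "\<sigma> U \<le> \<sigma> V" unfolding \<sigma>[OF \<open>scott_open U\<close>] \<sigma>[OF \<open>scott_open V\<close>]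
      by (intro sum_mono mult_left_mono) (auto simp: dirac_def)
  qed
  moreover have "open_modular \<sigma>"
    unfolding open_modular_def
  proof (intro allI impI)
    fix U V assume U: "scott_open U" and V: "scott_open V"
    show "\<sigma> U + \<sigma> V = \<sigma> (U \<union> V) + \<sigma> (U \<inter> V)"
      unfolding \<sigma>[OF U] \<sigma>[OF V] \<sigma>[OF scott_open_Un[OF U V]] \<sigma>[OF scott_open_Int[OF U V]]
        sum.distrib[symmetric]
      by (intro sum.cong refl) (auto simp: dirac_def)
  qed
  moreover have "tight_columns \<sigma>"
  proof -
    have "\<sigma> (left_or_high N L) = \<sigma> UNIV" for L
      unfolding \<sigma>[OF scott_open_left_or_high] \<sigma>[OF scott_open_UNIV]
      using x_left by (intro sum.cong) (auto simp: dirac_def left_or_high_def)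
    then show ?thesis unfolding tight_columns_def by (intro allI impI exI[of _ N]) simp
  qed
  moreover have "vanishing_at_top \<sigma>"
  proof -
    have "\<sigma> (quadrant N N) = 0"
      unfolding \<sigma>[OF scott_open_quadrant[OF order_refl]]
      by (intro sum.neutral) (auto simp: dirac_def quadrant_def dest!: x_left)
    then show ?thesis unfolding vanishing_at_top_def by (intro allI impI exI[of _ N]) simp
  qed
  ultimately show ?thesis unfolding tame_valuation_def by blast
qed

lemma open_monotoneD:
  "open_monotone \<nu> \<Longrightarrow> scott_open U \<Longrightarrow> scott_open V \<Longrightarrow> U \<subseteq> V \<Longrightarrow> \<nu> U \<le> \<nu> V"
  unfolding open_monotone_def by blast

lemma open_modularD:
  "open_modular \<nu> \<Longrightarrow> scott_open U \<Longrightarrow> scott_open V \<Longrightarrow> \<nu> U + \<nu> V = \<nu> (U \<union> V) + \<nu> (U \<inter> V)"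
  unfolding open_modular_def by blast

lemma open_modular_Un_le:
  assumes "open_modular \<nu>" "scott_open U" "scott_open V"
  shows "\<nu> (U \<union> V) \<le> \<nu> U + \<nu> V"
  using open_modularD[OF assms] by (metis le_iff_add)

lemma top_region_le_sum:
  assumes "open_modular \<nu>" "finite F"
  shows "\<nu> (top_region F L) \<le> (\<Sum>c\<in>F. \<nu> (top_region {c} L)) + \<nu> (quadrant L L)"
  using assms(2)
proof (induction F rule: finite_induct)
  case empty
  then show ?case by simp
next
  case (insert c F)
  have "\<nu> (top_region (insert c F) L) \<le> \<nu> (top_region {c} L) + \<nu> (top_region F L)"
    using open_modular_Un_le[OF assms(1) scott_open_top_region scott_open_top_region, of "{c}" L F L]
    by (simp only: top_region_Un)
  also have "\<dots> \<le> \<nu> (top_region {c} L) + ((\<Sum>c\<in>F. \<nu> (top_region {c} L)) + \<nu> (quadrant L L))"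
    using insert.IH by (rule add_left_mono)
  finally show ?case using insert by (simp add: add.assoc)
qed

lemma sum_top_region_le:
  assumes "open_modular \<nu>"
  shows "(\<Sum>c<n. \<nu> (top_region {c} L)) \<le> \<nu> (top_region {..<n} L) + of_nat n * \<nu> (quadrant L L)"
proof (induction n)
  case 0
  then show ?case by simp
next
  case (Suc n)
  have step: "\<nu> (top_region {n} L) + \<nu> (top_region {..<n} L) = \<nu> (top_region {..<Suc n} L) + \<nu> (quadrant L L)"
    using open_modularD[OF assms scott_open_top_region scott_open_top_region, of "{n}" L "{..<n}"]
    by (simp add: lessThan_Suc top_region_Un top_region_Int)
  have "(\<Sum>c<Suc n. \<nu> (top_region {c} L)) = \<nu> (top_region {n} L) + (\<Sum>c<n. \<nu> (top_region {c} L))"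
    by (simp add: add.commute)
  also have "\<dots> \<le> \<nu> (top_region {n} L) + (\<nu> (top_region {..<n} L) + of_nat n * \<nu> (quadrant L L))"
    using Suc.IH by (rule add_left_mono)
  also have "\<dots> = \<nu> (top_region {..<Suc n} L) + \<nu> (quadrant L L) + of_nat n * \<nu> (quadrant L L)"
    by (simp add: add.assoc flip: step)
  also have "\<dots> = \<nu> (top_region {..<Suc n} L) + of_nat (Suc n) * \<nu> (quadrant L L)"
    by (simp add: algebra_simps)
  finally show ?case .
qed

lemma of_nat_mult_ennreal_divide_le:
  assumes "e > 0"
  shows "of_nat n * ennreal (e / Suc n) \<le> ennreal e"
proof -
  have "of_nat n * ennreal (e / Suc n) = ennreal (n * (e / Suc n))"
    by (metis ennreal_mult' ennreal_of_nat_eq_real_of_nat of_nat_0_le_iff)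
  also have "\<dots> \<le> ennreal e"
    using assms by (intro ennreal_leI) (simp add: field_simps)
  finally show ?thesis .
qed

lemma suminf_column_top_mass_le:
  assumes mono: "open_monotone \<nu>" and modular: "open_modular \<nu>"
    and vanishing: "vanishing_at_top \<nu>"
  shows "(\<Sum>c. column_top_mass \<nu> c) \<le> \<nu> UNIV"
proof (rule suminf_le_const[OF summableI])
  fix n
  show "(\<Sum>c<n. column_top_mass \<nu> c) \<le> \<nu> UNIV"
  proof (rule ennreal_le_epsilon)
    fix e :: real assume "e > 0"
    then obtain K where K: "\<nu> (quadrant K K) \<le> ennreal (e / Suc n)"
      using vanishing unfolding vanishing_at_top_def by (meson divide_pos_pos of_nat_0_less_iff zero_less_Suc)
    have "(\<Sum>c<n. column_top_mass \<nu> c) \<le> (\<Sum>c<n. \<nu> (top_region {c} K))"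
      unfolding column_top_mass_def by (intro sum_mono INF_lower) auto
    also have "\<dots> \<le> \<nu> (top_region {..<n} K) + of_nat n * \<nu> (quadrant K K)"
      by (rule sum_top_region_le[OF modular])
    also have "\<dots> \<le> \<nu> UNIV + of_nat n * ennreal (e / Suc n)"
      using K by (intro add_mono mult_left_mono open_monotoneD[OF mono] scott_open_top_region
          scott_open_UNIV) auto
    also have "\<dots> \<le> \<nu> UNIV + ennreal e"
      using of_nat_mult_ennreal_divide_le[OF \<open>e > 0\<close>] by (rule add_left_mono)
    finally show "(\<Sum>c<n. column_top_mass \<nu> c) \<le> \<nu> UNIV + ennreal e" .
  qed
qed

lemma column_top_mass_le: "open_monotone \<nu> \<Longrightarrow> column_top_mass \<nu> c \<le> \<nu> UNIV"
  unfolding column_top_mass_def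
  by (rule INF_lower2[of 0]) (auto intro: open_monotoneD scott_open_top_region scott_open_UNIV)

lemma column_top_mass_mono: "val_le \<nu> \<nu>' \<Longrightarrow> column_top_mass \<nu> c \<le> column_top_mass \<nu>' c"
  unfolding column_top_mass_def val_le_def by (intro INF_mono) (use scott_open_top_region in blast)

lemma eventually_sum_top_region_less:
  assumes mono: "open_monotone \<nu>" and finite: "\<nu> UNIV < \<infinity>" and "finite A" "d > 0"
  shows "eventually (\<lambda>L. (\<Sum>c\<in>A. \<nu> (top_region {c} L)) < (\<Sum>c\<in>A. column_top_mass \<nu> c) + ennreal d)
    sequentially"
proof (rule order_tendstoD(2))
  have "(\<lambda>L. \<nu> (top_region {c} L)) \<longlonglongrightarrow> column_top_mass \<nu> c" for c
    unfolding column_top_mass_def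
    by (intro LIMSEQ_INF) (auto simp: decseq_def intro!: open_monotoneD[OF mono]
        scott_open_top_region top_region_antimono)
  then show "(\<lambda>L. \<Sum>c\<in>A. \<nu> (top_region {c} L)) \<longlonglongrightarrow> (\<Sum>c\<in>A. column_top_mass \<nu> c)"
    by (rule tendsto_sum)
  have "column_top_mass \<nu> c < \<infinity>" for c
    using column_top_mass_le[OF mono] finite by (rule order_le_less_trans)
  then have "(\<Sum>c\<in>A. column_top_mass \<nu> c) < \<infinity>" using \<open>finite A\<close> by simp
  then show "(\<Sum>c\<in>A. column_top_mass \<nu> c) < (\<Sum>c\<in>A. column_top_mass \<nu> c) + ennreal d"
    using \<open>d > 0\<close> by (simp add: ennreal_add_left_cancel_less)
qed

lemma quadrant_le_column_top_mass:
  assumes mono: "open_monotone \<nu>" and modular: "open_modular \<nu>" and finite: "\<nu> UNIV < \<infinity>"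
    and vanishing: "vanishing_at_top \<nu>" and "e > 0"
  obtains K' L where "K \<le> L" "\<nu> (quadrant K L) \<le> (\<Sum>c\<in>{K..<K'}. column_top_mass \<nu> c) + ennreal e"
proof -
  define d where "d = e / 3"
  have "d > 0" using \<open>e > 0\<close> by (simp add: d_def)
  obtain K0 where K0: "\<nu> (quadrant K0 K0) \<le> ennreal d"
    using vanishing \<open>d > 0\<close> unfolding vanishing_at_top_def by blast
  define K' where "K' = max K K0"
  define S where "S = (\<Sum>c\<in>{K..<K'}. column_top_mass \<nu> c)"
  obtain L0 where L0: "\<And>L. L \<ge> L0 \<Longrightarrow> (\<Sum>c\<in>{K..<K'}. \<nu> (top_region {c} L)) < S + ennreal d"
    using eventually_sum_top_region_less[OF mono finite _ \<open>d > 0\<close>, of "{K..<K'}"]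
    unfolding S_def eventually_sequentially by blast
  define L where "L = max L0 K'"
  have "K \<le> K'" "K' \<le> L" "K0 \<le> K'" by (simp_all add: K'_def L_def)
  have small: "\<nu> (quadrant M M) \<le> ennreal d" if "K0 \<le> M" for M
    using K0 open_monotoneD[OF mono scott_open_quadrant scott_open_quadrant quadrant_antimono[OF that that]]
    by (meson order.refl order_trans)
  have "\<nu> (quadrant K L) \<le> \<nu> (top_region {K..<K'} L \<union> quadrant K' K')"
    using \<open>K \<le> K'\<close> \<open>K' \<le> L\<close> quadrant_subset_top_region[OF \<open>K' \<le> L\<close>]
    by (intro open_monotoneD[OF mono] scott_open_quadrant scott_open_Un scott_open_top_region) auto
  also have "\<dots> \<le> \<nu> (top_region {K..<K'} L) + \<nu> (quadrant K' K')"
    by (intro open_modular_Un_le[OF modular] scott_open_top_region scott_open_quadrant order_refl)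
  also have "\<dots> \<le> (\<Sum>c\<in>{K..<K'}. \<nu> (top_region {c} L)) + \<nu> (quadrant L L) + \<nu> (quadrant K' K')"
    using top_region_le_sum[OF modular] by (intro add_right_mono) simp
  also have "\<dots> \<le> S + ennreal d + ennreal d + ennreal d"
    using less_imp_le[OF L0[of L]] small[of L] small[of K'] \<open>K0 \<le> K'\<close> \<open>K' \<le> L\<close>
    by (intro add_mono) (auto simp: L_def)
  also have "\<dots> = S + ennreal e"
    using \<open>d > 0\<close> by (simp add: d_def add.assoc flip: ennreal_plus)
  finally show ?thesis using that \<open>K \<le> K'\<close> \<open>K' \<le> L\<close> unfolding S_def by (meson order_trans)
qed

lemma quadrant_add_left_or_high_le:
  assumes mono: "open_monotone \<nu>" and modular: "open_modular \<nu>" and "N \<le> K" "K \<le> L"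
  shows "\<nu> (quadrant K K) + \<nu> (left_or_high N L) \<le> \<nu> UNIV + \<nu> (quadrant K L)"
proof -
  have "\<nu> (quadrant K K) + \<nu> (left_or_high N L) = \<nu> (quadrant K K \<union> left_or_high N L) + \<nu> (quadrant K L)"
    using open_modularD[OF modular scott_open_quadrant[OF order_refl] scott_open_left_or_high]
    by (simp add: quadrant_Int_left_or_high[OF assms(3,4)])
  also have "\<dots> \<le> \<nu> UNIV + \<nu> (quadrant K L)"
    by (intro add_right_mono open_monotoneD[OF mono] scott_open_Un scott_open_quadrant
        scott_open_left_or_high scott_open_UNIV) auto
  finally show ?thesis .
qed

text \<open>Modularity against the nearly full set \<open>left_or_high N L\<close> moves the mass of
  \<open>quadrant K K\<close> into \<open>quadrant K L\<close>, which for large \<open>L\<close> only the column tops can charge.\<close>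

lemma tight_quadrant_le:
  assumes mono: "open_monotone \<nu>" and modular: "open_modular \<nu>"
    and vanishing: "vanishing_at_top \<nu>" and "\<nu> UNIV \<le> C" "C < \<infinity>" "N \<le> K" "d > 0"
    and tight: "\<And>L. C \<le> \<nu> (left_or_high N L) + ennreal d"
    and tail: "\<And>K'. (\<Sum>c\<in>{K..<K'}. column_top_mass \<nu> c) \<le> ennreal d"
  shows "\<nu> (quadrant K K) \<le> ennreal (3 * d)"
proof -
  have "\<nu> UNIV < \<infinity>" using \<open>\<nu> UNIV \<le> C\<close> \<open>C < \<infinity>\<close> by (rule order_le_less_trans)
  then obtain K' L where "K \<le> L"
    and quadrant: "\<nu> (quadrant K L) \<le> (\<Sum>c\<in>{K..<K'}. column_top_mass \<nu> c) + ennreal d"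
    using quadrant_le_column_top_mass[OF mono modular _ vanishing \<open>d > 0\<close>] by metis
  have "C + \<nu> (quadrant K K) \<le> \<nu> (quadrant K K) + \<nu> (left_or_high N L) + ennreal d"
    using tight[of L] by (simp add: add_ac add_left_mono)
  also have "\<dots> \<le> \<nu> UNIV + \<nu> (quadrant K L) + ennreal d"
    using quadrant_add_left_or_high_le[OF mono modular \<open>N \<le> K\<close> \<open>K \<le> L\<close>] by (rule add_right_mono)
  also have "\<dots> \<le> C + (ennreal d + ennreal d) + ennreal d"
    using \<open>\<nu> UNIV \<le> C\<close> quadrant tail[of K'] by (intro add_mono order_refl) (auto intro: order_trans)
  also have "\<dots> = C + ennreal (3 * d)"
    using \<open>d > 0\<close> by (simp add: add.assoc flip: ennreal_plus)
  finally show ?thesis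
    using \<open>C < \<infinity>\<close> by (auto simp: ennreal_add_left_cancel_le)
qed

lemma ennreal_suminf_tail_le:
  fixes m :: "nat \<Rightarrow> ennreal"
  assumes "suminf m < \<infinity>" "e > 0"
  obtains n0 where "\<And>K K'. n0 \<le> K \<Longrightarrow> (\<Sum>c\<in>{K..<K'}. m c) \<le> ennreal e"
proof -
  have "suminf m \<noteq> \<infinity>" using assms(1) by simp
  then obtain n0 where n0: "suminf m < (\<Sum>c<n0. m c) + ennreal e"
    using SUP_approx_ennreal[OF \<open>e > 0\<close> UNIV_not_empty suminf_eq_SUP] by blast
  have "(\<Sum>c<n0. m c) \<le> suminf m" by (rule sum_le_suminf) auto
  then have "(\<Sum>c<n0. m c) \<noteq> \<infinity>"
    using assms(1) by (metis order_le_less_trans less_imp_neq)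
  have "(\<Sum>c\<in>{K..<K'}. m c) \<le> ennreal e" if "n0 \<le> K" for K K'
  proof -
    have "(\<Sum>c<n0. m c) + (\<Sum>c\<in>{K..<K'}. m c) = (\<Sum>c\<in>{..<n0} \<union> {K..<K'}. m c)"
      using that by (subst sum.union_disjoint) auto
    also have "\<dots> \<le> suminf m"
      by (rule sum_le_suminf) auto
    also have "\<dots> \<le> (\<Sum>c<n0. m c) + ennreal e"
      using n0 by simp
    finally show ?thesis
      using \<open>(\<Sum>c<n0. m c) \<noteq> \<infinity>\<close> ennreal_add_left_cancel_le by blast
  qed
  then show ?thesis using that by blast
qed

locale directed_tame_sup =
  fixes F :: "(jpt set \<Rightarrow> ennreal) set" and \<nu> :: "jpt set \<Rightarrow> ennreal"
  assumes directed: "val_directed F"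
    and tame: "\<And>a. a \<in> F \<Longrightarrow> tame_valuation a"
    and sup_eq: "\<And>U. scott_open U \<Longrightarrow> \<nu> U = (SUP a\<in>F. a U)"
begin

lemma nonempty: "F \<noteq> {}"
  using directed unfolding val_directed_def by blast

lemma upper_bound:
  assumes "a \<in> F" "b \<in> F"
  obtains c where "c \<in> F" "val_le a c" "val_le b c"
  using directed assms unfolding val_directed_def by blast

lemma le_sup:
  assumes "a \<in> F" "scott_open U"
  shows "a U \<le> \<nu> U"
  unfolding sup_eq[OF assms(2)] using assms(1) by (rule SUP_upper)

lemma add_eq_SUP:
  assumes "scott_open U" "scott_open V"
  shows "\<nu> U + \<nu> V = (SUP a\<in>F. a U + a V)"
proof -
  have "(SUP a\<in>F. a U + a V) = (SUP a\<in>F. a U) + (SUP a\<in>F. a V)"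
  proof (rule SUP_add_directed_ennreal)
    fix a b assume "a \<in> F" "b \<in> F"
    then obtain c where "c \<in> F" "val_le a c" "val_le b c" by (rule upper_bound)
    then show "\<exists>c\<in>F. a U + b V \<le> c U + c V"
      using assms unfolding val_le_def by (blast intro: add_mono)
  qed
  then show ?thesis using assms by (simp add: sup_eq)
qed

lemma monotone: "open_monotone \<nu>"
  unfolding open_monotone_def
  using tame by (auto simp: sup_eq tame_valuation_def open_monotone_def intro!: SUP_mono)

lemma modular: "open_modular \<nu>"
  unfolding open_modular_def
proof (intro allI impI)
  fix U V assume U: "scott_open U" and V: "scott_open V"
  have "\<nu> U + \<nu> V = (SUP a\<in>F. a U + a V)" using U V by (rule add_eq_SUP)
  also have "\<dots> = (SUP a\<in>F. a (U \<union> V) + a (U \<inter> V))"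
    using tame U V by (intro SUP_cong refl) (auto simp: tame_valuation_def open_modular_def)
  also have "\<dots> = \<nu> (U \<union> V) + \<nu> (U \<inter> V)"
    using U V by (intro add_eq_SUP[symmetric] scott_open_Un scott_open_Int)
  finally show "\<nu> U + \<nu> V = \<nu> (U \<union> V) + \<nu> (U \<inter> V)" .
qed

context
  assumes finite: "\<nu> UNIV < \<infinity>"
begin

lemma member_tame:
  assumes "a \<in> F"
  shows "open_monotone a" "open_modular a" "tight_columns a" "vanishing_at_top a"
proof -
  have "a UNIV < \<infinity>" using le_sup[OF assms scott_open_UNIV] finite by (rule order_le_less_trans)
  then show "open_monotone a" "open_modular a" "tight_columns a" "vanishing_at_top a"
    using tame[OF assms] unfolding tame_valuation_def by blast+
qed

lemma tight_uniformly:
  assumes "e > 0"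
  obtains j N where "j \<in> F"
    "\<And>b L. b \<in> F \<Longrightarrow> val_le j b \<Longrightarrow> \<nu> UNIV \<le> b (left_or_high N L) + ennreal e"
proof -
  have "\<nu> UNIV \<noteq> \<infinity>" using finite by simp
  then obtain j where j: "j \<in> F" "\<nu> UNIV < j UNIV + ennreal (e / 2)"
    using SUP_approx_ennreal[OF half_gt_zero[OF \<open>e > 0\<close>] nonempty sup_eq[OF scott_open_UNIV]] by blast
  then obtain N where N: "\<And>L. j UNIV \<le> j (left_or_high N L) + ennreal (e / 2)"
    using member_tame(3)[OF j(1)] \<open>e > 0\<close> unfolding tight_columns_def by (meson half_gt_zero)
  have "\<nu> UNIV \<le> b (left_or_high N L) + ennreal e" if "b \<in> F" "val_le j b" for b L
  proof -
    have "\<nu> UNIV \<le> j (left_or_high N L) + ennreal (e / 2) + ennreal (e / 2)"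
      using j(2) N[of L] by (meson add_right_mono less_imp_le order_trans)
    also have "\<dots> \<le> b (left_or_high N L) + ennreal (e / 2) + ennreal (e / 2)"
      using that(2) scott_open_left_or_high unfolding val_le_def by (blast intro: add_right_mono)
    also have "\<dots> = b (left_or_high N L) + ennreal e"
      using \<open>e > 0\<close> by (simp add: add.assoc flip: ennreal_plus)
    finally show ?thesis .
  qed
  then show ?thesis by (rule that[OF j(1)])
qed

lemma tight: "tight_columns \<nu>"
  unfolding tight_columns_def
proof (intro allI impI)
  fix e :: real assume "e > 0"
  then obtain j N where "j \<in> F"
    "\<And>b L. b \<in> F \<Longrightarrow> val_le j b \<Longrightarrow> \<nu> UNIV \<le> b (left_or_high N L) + ennreal e"
    by (rule tight_uniformly) blast
  then have "\<nu> UNIV \<le> \<nu> (left_or_high N L) + ennreal e" for L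
    using le_sup[OF \<open>j \<in> F\<close> scott_open_left_or_high] by (meson add_right_mono order_trans val_le_def order_refl)
  then show "\<exists>N. \<forall>L. \<nu> UNIV \<le> \<nu> (left_or_high N L) + ennreal e" by blast
qed

lemma column_top_mass_tail_uniformly:
  assumes "e > 0"
  obtains n0 where "\<And>a K K'. a \<in> F \<Longrightarrow> n0 \<le> K \<Longrightarrow> (\<Sum>c\<in>{K..<K'}. column_top_mass a c) \<le> ennreal e"
proof -
  define m where "m c = (SUP a\<in>F. column_top_mass a c)" for c
  have "suminf m = (SUP a\<in>F. \<Sum>c. column_top_mass a c)"
    unfolding m_def
  proof (rule ennreal_suminf_SUP_eq_directed)
    fix N :: "nat set" and a b assume "a \<in> F" "b \<in> F"
    then obtain c where "c \<in> F" "val_le a c" "val_le b c" by (rule upper_bound)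
    then show "\<exists>c\<in>F. \<forall>n\<in>N. column_top_mass a n \<le> column_top_mass c n \<and> column_top_mass b n \<le> column_top_mass c n"
      by (blast intro: column_top_mass_mono)
  qed
  also have "\<dots> \<le> \<nu> UNIV"
  proof (rule SUP_least)
    fix a assume "a \<in> F"
    show "(\<Sum>c. column_top_mass a c) \<le> \<nu> UNIV"
      using suminf_column_top_mass_le[OF member_tame(1,2,4)[OF \<open>a \<in> F\<close>]]
        le_sup[OF \<open>a \<in> F\<close> scott_open_UNIV]
      by (rule order_trans)
  qed
  finally have "suminf m < \<infinity>" using finite by (rule order_le_less_trans)
  then obtain n0 where n0: "\<And>K K'. n0 \<le> K \<Longrightarrow> (\<Sum>c\<in>{K..<K'}. m c) \<le> ennreal e"
    using \<open>e > 0\<close> by (rule ennreal_suminf_tail_le) blast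
  have "(\<Sum>c\<in>{K..<K'}. column_top_mass a c) \<le> ennreal e" if "a \<in> F" "n0 \<le> K" for a K K'
  proof -
    have "(\<Sum>c\<in>{K..<K'}. column_top_mass a c) \<le> (\<Sum>c\<in>{K..<K'}. m c)"
      unfolding m_def using that(1) by (intro sum_mono SUP_upper)
    also have "\<dots> \<le> ennreal e" using that(2) by (rule n0)
    finally show ?thesis .
  qed
  then show ?thesis by (rule that)
qed

lemma vanishing: "vanishing_at_top \<nu>"
  unfolding vanishing_at_top_def
proof (intro allI impI)
  fix e :: real assume "e > 0"
  then have "e / 3 > 0" by simp
  obtain j N where "j \<in> F" and tight_j:
    "\<And>b L. b \<in> F \<Longrightarrow> val_le j b \<Longrightarrow> \<nu> UNIV \<le> b (left_or_high N L) + ennreal (e / 3)"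
    using \<open>e / 3 > 0\<close> by (rule tight_uniformly) blast
  obtain n0 where tail:
    "\<And>a K K'. a \<in> F \<Longrightarrow> n0 \<le> K \<Longrightarrow> (\<Sum>c\<in>{K..<K'}. column_top_mass a c) \<le> ennreal (e / 3)"
    using \<open>e / 3 > 0\<close> by (rule column_top_mass_tail_uniformly) blast
  define K where "K = max N n0"
  have "a (quadrant K K) \<le> ennreal e" if "a \<in> F" for a
  proof -
    obtain b where "b \<in> F" "val_le a b" "val_le j b" using \<open>a \<in> F\<close> \<open>j \<in> F\<close> by (rule upper_bound)
    have "a (quadrant K K) \<le> b (quadrant K K)"
      using \<open>val_le a b\<close> scott_open_quadrant[OF order_refl] unfolding val_le_def by blast
    also have "\<dots> \<le> ennreal (3 * (e / 3))"
      using member_tame[OF \<open>b \<in> F\<close>] le_sup[OF \<open>b \<in> F\<close> scott_open_UNIV] finite \<open>e / 3 > 0\<close>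
        tight_j[OF \<open>b \<in> F\<close> \<open>val_le j b\<close>] tail[OF \<open>b \<in> F\<close>]
      by (intro tight_quadrant_le[where C = "\<nu> UNIV" and N = N]) (auto simp: K_def)
    finally show ?thesis by simp
  qed
  then have "\<nu> (quadrant K K) \<le> ennreal e"
    by (simp add: sup_eq[OF scott_open_quadrant[OF order_refl]] SUP_least)
  then show "\<exists>K. \<nu> (quadrant K K) \<le> ennreal e" by blast
qed

end

lemma sup_tame: "tame_valuation \<nu>"
  unfolding tame_valuation_def using monotone modular tight vanishing by blast

end

lemma minimal_valuation_tame: "minimal_valuation \<nu> \<Longrightarrow> tame_valuation \<nu>"
proof (induction rule: minimal_valuation.induct)
  case (simple \<nu>)
  then show ?case by (rule simple_valuation_tame)
next
  case (dsup F \<nu>)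
  then interpret directed_tame_sup F \<nu> by unfold_locales auto
  show ?case by (rule sup_tame)
qed

lemma not_vanishing_at_top_add_mu:
  assumes "r > 0"
  shows "\<not> vanishing_at_top (\<lambda>U. \<theta> U + ennreal r * mu U)"
proof
  assume "vanishing_at_top (\<lambda>U. \<theta> U + ennreal r * mu U)"
  then obtain K where K: "\<theta> (quadrant K K) + ennreal r * mu (quadrant K K) \<le> ennreal (r / 2)"
    using assms unfolding vanishing_at_top_def by (meson half_gt_zero)
  have "(K, enat K) \<in> quadrant K K" by (simp add: quadrant_def)
  then have "ennreal r \<le> \<theta> (quadrant K K) + ennreal r * mu (quadrant K K)"
    by (auto simp: mu_def)
  then have "ennreal r \<le> ennreal (r / 2)" using K by (rule order_trans)
  then show False using assms by (simp add: ennreal_le_iff)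
qed

theorem theorem3p13:
  fixes \<theta> :: "jpt set \<Rightarrow> ennreal" and r :: real
  assumes "discrete_valuation \<theta>"
    and "\<theta> UNIV + ennreal r = 1"
    and "r > 0"
  shows "\<not> minimal_valuation (\<lambda>U. \<theta> U + ennreal r * mu U)"
proof
  assume "minimal_valuation (\<lambda>U. \<theta> U + ennreal r * mu U)"
  then have "tame_valuation (\<lambda>U. \<theta> U + ennreal r * mu U)" by (rule minimal_valuation_tame)
  moreover have "\<theta> UNIV + ennreal r * mu UNIV < \<infinity>"
    using assms(2) by (simp add: mu_def)
  ultimately have "vanishing_at_top (\<lambda>U. \<theta> U + ennreal r * mu U)"
    unfolding tame_valuation_def by blast
  with not_vanishing_at_top_add_mu[OF assms(3)] show False by blast
qed

end
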